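(* Let $R$ be a finite commutative Frobenius ring of characteristic $2$, let $G=\{g_1,\dots,g_n\}$ be a finite group of order $n$ with a fixed listing of its elements, let $v_1\neq v_2$ be elements of the group ring $RG$, and let $A$ be an $n\times n$ reverse circulant matrix over $R$. Let $C_\sigma$ be the code over $R$ generated by the $2n\times 4n$ matrix $$M(\sigma)=\left(\, I_{2n} \;\middle|\; \begin{matrix} \sigma(v_1) & \sigma(v_2)+A\\ \sigma(v_2)+A & \sigma(v_1)\end{matrix}\,\right).$$ Then $C_\sigma$ is a self-dual code of length $4n$ if and only if $$(\sigma(v_1+v_2)+A)(\sigma((v_1+v_2)^* )+A)=I_n \quad\text{and}\quad \sigma(v_1)(\sigma((v_1+v_2)^* )+A)=(\sigma(v_1+v_2)+A)\sigma(v_1^* ).$$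
   Context: For $v=\sum_{g\in G}\alpha_g g\in RG$, $\sigma(v)$ is the $n\times n$ matrix over $R$ whose $(i,j)$ entry is $\alpha_{g_i^{-1}g_j}$. The canonical involution is $v^*=\sum_{g}\alpha_g g^{-1}$. An $n\times n$ matrix $(a_{ij})$ is reverse circulant if $a_{ij}$ depends only on $(i+j)\bmod n$. A code is the $R$-submodule of $R^{4n}$ spanned by the rows of the generator matrix; it is self-dual if it equals its dual with respect to the Euclidean inner product $\langle x,y\rangle=\sum_i x_iy_i$. *)

theory Defs
  imports Complex_Main "HOL-Algebra.Group" "Jordan_Normal_Form.Matrix"
begin

text \<open>A finite ring R is Frobenius iff it admits a generating character: an additive
character chi of (R,+) whose kernel contains no nonzero (left) ideal.\<close>
definition additive_character :: "('a::comm_ring_1 \<Rightarrow> complex) \<Rightarrow> bool" where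
  "additive_character chi \<longleftrightarrow> (\<forall>a b. chi (a + b) = chi a * chi b) \<and> (\<forall>a. chi a \<noteq> 0)"

definition frobenius_ring :: "'a::{comm_ring_1,finite} itself \<Rightarrow> bool" where
  "frobenius_ring _ \<longleftrightarrow> (\<exists>chi :: 'a \<Rightarrow> complex. additive_character chi \<and>
       (\<forall>a::'a. a \<noteq> 0 \<longrightarrow> (\<exists>r. chi (r * a) \<noteq> 1)))"

text \<open>Group ring elements: coefficient functions on the carrier of G (extensional).\<close>
definition group_ring :: "('g, 'b) monoid_scheme \<Rightarrow> ('g \<Rightarrow> 'a::zero) set" where
  "group_ring G = {v. \<forall>h. h \<notin> carrier G \<longrightarrow> v h = 0}"

definition gr_add :: "('g, 'b) monoid_scheme \<Rightarrow> ('g \<Rightarrow> 'a::comm_ring_1) \<Rightarrow> ('g \<Rightarrow> 'a) \<Rightarrow> 'g \<Rightarrow> 'a" where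
  "gr_add G v w = (\<lambda>h. if h \<in> carrier G then v h + w h else 0)"

text \<open>Canonical involution: v* = sum alpha_g g^{-1}, i.e. coefficient of h is alpha_{h^{-1}}.\<close>
definition gr_star :: "('g, 'b) monoid_scheme \<Rightarrow> ('g \<Rightarrow> 'a::comm_ring_1) \<Rightarrow> 'g \<Rightarrow> 'a" where
  "gr_star G v = (\<lambda>h. if h \<in> carrier G then v (inv\<^bsub>G\<^esub> h) else 0)"

text \<open>sigma(v): (i,j) entry is alpha_{g_i^{-1} g_j} (indices 0-based).\<close>
definition sigma_mat :: "('g, 'b) monoid_scheme \<Rightarrow> nat \<Rightarrow> (nat \<Rightarrow> 'g) \<Rightarrow> ('g \<Rightarrow> 'a::comm_ring_1) \<Rightarrow> 'a mat" where
  "sigma_mat G n g v = mat n n (\<lambda>(i,j). v (inv\<^bsub>G\<^esub> (g i) \<otimes>\<^bsub>G\<^esub> g j))"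

definition reverse_circulant :: "nat \<Rightarrow> 'a mat \<Rightarrow> bool" where
  "reverse_circulant n A \<longleftrightarrow> A \<in> carrier_mat n n \<and>
     (\<forall>i j k l. i < n \<longrightarrow> j < n \<longrightarrow> k < n \<longrightarrow> l < n \<longrightarrow>
        (i + j) mod n = (k + l) mod n \<longrightarrow> A $$ (i,j) = A $$ (k,l))"

definition row_code :: "'a::comm_ring_1 mat \<Rightarrow> 'a vec set" where
  "row_code M = {transpose_mat M *\<^sub>v c | c. c \<in> carrier_vec (dim_row M)}"

definition dual_code :: "nat \<Rightarrow> 'a::comm_ring_1 vec set \<Rightarrow> 'a vec set" where
  "dual_code N C = {y \<in> carrier_vec N. \<forall>x\<in>C. x \<bullet> y = 0}"

definition self_dual :: "nat \<Rightarrow> 'a::comm_ring_1 vec set \<Rightarrow> bool" where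
  "self_dual N C \<longleftrightarrow> C \<subseteq> carrier_vec N \<and> C = dual_code N C"

definition gen_matrix :: "('g, 'b) monoid_scheme \<Rightarrow> nat \<Rightarrow> (nat \<Rightarrow> 'g) \<Rightarrow>
    ('g \<Rightarrow> 'a::comm_ring_1) \<Rightarrow> ('g \<Rightarrow> 'a) \<Rightarrow> 'a mat \<Rightarrow> 'a mat" where
  "gen_matrix G n g v1 v2 A =
     (let S1 = sigma_mat G n g v1; S2 = sigma_mat G n g v2 + A in
      four_block_mat (1\<^sub>m (2*n)) (four_block_mat S1 S2 S2 S1) (0\<^sub>m 0 (2*n)) (0\<^sub>m 0 (2*n)))"

end

theory Submission
  imports Defs "Jordan_Normal_Form.Determinant"
begin

text \<open>A generator matrix \<open>(I | B)\<close> with \<open>B\<close> square generates a self-dual code iff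
\<open>B B\<^sup>T = -I\<close>: its rows are pairwise orthogonal exactly when \<open>I + B B\<^sup>T = 0\<close>, and then \<open>-B\<^sup>T\<close> is a
two-sided inverse of \<open>B\<close>, so every vector orthogonal to the code has the form \<open>(c, B\<^sup>T c)\<close>.
For \<open>B = [[S, T], [T, S]]\<close> with \<open>S = \<sigma>(v\<^sub>1)\<close> and \<open>T = \<sigma>(v\<^sub>2) + A\<close>, the condition \<open>B B\<^sup>T = I\<close>
(as \<open>-I = I\<close> in characteristic 2) says \<open>S S\<^sup>T + T T\<^sup>T = I\<close> and \<open>S T\<^sup>T + T S\<^sup>T = 0\<close>. As \<open>\<sigma>\<close> is
additive, \<open>\<sigma>(v\<^sup>*) = \<sigma>(v)\<^sup>T\<close> and a reverse circulant \<open>A\<close> is symmetric, the matrices of the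
statement are \<open>P = S + T\<close>, \<open>P\<^sup>T\<close> and \<open>S\<^sup>T\<close>, and in characteristic 2 the two block conditions
are equivalent to \<open>P P\<^sup>T = I\<close> and \<open>S P\<^sup>T = P S\<^sup>T\<close>.\<close>

lemma mat_mult_left_right_inverse_comm_ring:
  fixes A B :: "'a :: comm_ring_1 mat"
  assumes A: "A \<in> carrier_mat n n" and B: "B \<in> carrier_mat n n" and AB: "A * B = 1\<^sub>m n"
  shows "B * A = 1\<^sub>m n"
proof -
  have det_unit: "det B * det A = 1"
    using det_mult[OF A B] AB by (simp add: mult.commute)
  note adj = adj_mat[OF A]
  have "adj_mat A = (adj_mat A * A) * B"
    using AB adj(1) A B by (simp add: assoc_mult_mat)
  then have adj_eq: "adj_mat A = det A \<cdot>\<^sub>m B"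
    using adj(3) mult_smult_assoc_mat[OF one_carrier_mat B, of "det A"] B by simp
  have "det A \<cdot>\<^sub>m (B * A) = det A \<cdot>\<^sub>m 1\<^sub>m n"
    using adj(3) adj_eq A B by (metis mult_smult_assoc_mat)
  then have "det B \<cdot>\<^sub>m (det A \<cdot>\<^sub>m (B * A)) = det B \<cdot>\<^sub>m (det A \<cdot>\<^sub>m 1\<^sub>m n)"
    by simp
  moreover have "\<And>X. det B \<cdot>\<^sub>m (det A \<cdot>\<^sub>m X) = (X :: 'a mat)"
    by (rule eq_matI) (auto simp: mult.assoc[symmetric] det_unit)
  ultimately show ?thesis
    by simp
qed

definition systematic_code :: "'a :: comm_ring_1 mat \<Rightarrow> 'a vec set" where
  "systematic_code B = {c @\<^sub>v (transpose_mat B *\<^sub>v c) | c. c \<in> carrier_vec (dim_row B)}"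

lemma row_code_four_block_one_mat:
  fixes B :: "'a :: comm_ring_1 mat"
  assumes B: "B \<in> carrier_mat m k"
  shows "row_code (four_block_mat (1\<^sub>m m) B (0\<^sub>m 0 m) (0\<^sub>m 0 k)) = systematic_code B"
proof -
  let ?M = "four_block_mat (1\<^sub>m m) B (0\<^sub>m 0 m) (0\<^sub>m 0 k)"
  have MT: "transpose_mat ?M = four_block_mat (1\<^sub>m m) (0\<^sub>m m 0) (transpose_mat B) (0\<^sub>m k 0)"
    using transpose_four_block_mat[OF one_carrier_mat B zero_carrier_mat zero_carrier_mat] by simp
  have codeword: "transpose_mat ?M *\<^sub>v c = c @\<^sub>v (transpose_mat B *\<^sub>v c)" if c: "c \<in> carrier_vec m" for c
  proof -
    have "c = c @\<^sub>v 0\<^sub>v 0"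
      using c by (intro eq_vecI) auto
    moreover have "transpose_mat ?M *\<^sub>v (c @\<^sub>v 0\<^sub>v 0)
        = (1\<^sub>m m *\<^sub>v c + 0\<^sub>m m 0 *\<^sub>v 0\<^sub>v 0) @\<^sub>v (transpose_mat B *\<^sub>v c + 0\<^sub>m k 0 *\<^sub>v 0\<^sub>v 0)"
      unfolding MT by (rule four_block_mat_mult_vec) (use B c in auto)
    moreover have "0\<^sub>m r 0 *\<^sub>v 0\<^sub>v 0 = (0\<^sub>v r :: 'a vec)" for r
      by (intro eq_vecI) auto
    ultimately show ?thesis
      using B c by simp
  qed
  have "dim_row ?M = m" "dim_row B = m"
    using B by auto
  then show ?thesis
    unfolding row_code_def systematic_code_def by (metis codeword)
qed

lemma systematic_code_carrier:
  assumes "B \<in> carrier_mat m k"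
  shows "systematic_code B \<subseteq> carrier_vec (m + k)"
  using assms unfolding systematic_code_def by auto

lemma systematic_codeword_scalar_prod:
  fixes B :: "'a :: comm_ring_1 mat"
  assumes B: "B \<in> carrier_mat m k" and c: "c \<in> carrier_vec m" and d: "d \<in> carrier_vec m"
  shows "(c @\<^sub>v (transpose_mat B *\<^sub>v c)) \<bullet> (d @\<^sub>v (transpose_mat B *\<^sub>v d))
    = c \<bullet> d + c \<bullet> ((B * transpose_mat B) *\<^sub>v d)"
proof -
  have "(c @\<^sub>v (transpose_mat B *\<^sub>v c)) \<bullet> (d @\<^sub>v (transpose_mat B *\<^sub>v d))
      = c \<bullet> d + (transpose_mat B *\<^sub>v c) \<bullet> (transpose_mat B *\<^sub>v d)"
    using B c d by (intro scalar_prod_append[of _ m _ k]) auto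
  also have "(transpose_mat B *\<^sub>v c) \<bullet> (transpose_mat B *\<^sub>v d) = c \<bullet> (B *\<^sub>v (transpose_mat B *\<^sub>v d))"
    using B c d by (intro transpose_vec_mult_scalar) auto
  also have "B *\<^sub>v (transpose_mat B *\<^sub>v d) = (B * transpose_mat B) *\<^sub>v d"
    using B d by (simp add: assoc_mult_mat_vec)
  finally show ?thesis .
qed

lemma systematic_code_self_orthogonal_iff:
  fixes B :: "'a :: comm_ring_1 mat"
  assumes B: "B \<in> carrier_mat m k"
  shows "systematic_code B \<subseteq> dual_code (m + k) (systematic_code B) \<longleftrightarrow> B * transpose_mat B = - 1\<^sub>m m"
proof
  assume orth: "systematic_code B \<subseteq> dual_code (m + k) (systematic_code B)"
  show "B * transpose_mat B = - 1\<^sub>m m"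
  proof (rule eq_matI)
    fix i j assume "i < dim_row (- 1\<^sub>m m :: 'a mat)" "j < dim_col (- 1\<^sub>m m :: 'a mat)"
    then have i: "i < m" and j: "j < m" by auto
    let ?BBT = "B * transpose_mat B"
    have "unit_vec m i @\<^sub>v (transpose_mat B *\<^sub>v unit_vec m i) \<in> systematic_code B"
      "unit_vec m j @\<^sub>v (transpose_mat B *\<^sub>v unit_vec m j) \<in> systematic_code B"
      using B unfolding systematic_code_def by auto
    then have "unit_vec m i \<bullet> unit_vec m j + unit_vec m i \<bullet> (?BBT *\<^sub>v unit_vec m j) = 0"
      using orth B systematic_codeword_scalar_prod[OF B, of "unit_vec m i" "unit_vec m j"]
      unfolding dual_code_def by auto
    moreover have unit_entry: "unit_vec m i \<bullet> (M *\<^sub>v unit_vec m j) = M $$ (i, j)"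
      if "M \<in> carrier_mat m m" for M :: "'a mat"
      using that i j by simp
    ultimately have "unit_vec m i \<bullet> unit_vec m j + ?BBT $$ (i, j) = 0"
      using B by (metis mult_carrier_mat transpose_carrier_mat)
    then show "?BBT $$ (i, j) = (- 1\<^sub>m m) $$ (i, j)"
      using i j by (cases "i = j") (simp_all del: index_mult_mat add: eq_neg_iff_add_eq_0 add.commute)
  qed (use B in auto)
next
  assume BBT: "B * transpose_mat B = - 1\<^sub>m m"
  show "systematic_code B \<subseteq> dual_code (m + k) (systematic_code B)"
    using systematic_code_carrier[OF B] B
    by (auto simp: dual_code_def systematic_code_def systematic_codeword_scalar_prod[OF B] BBT)
qed

lemma dual_code_subset_systematic_code:
  fixes B :: "'a :: comm_ring_1 mat"
  assumes B: "B \<in> carrier_mat m m" and BBT: "B * transpose_mat B = - 1\<^sub>m m"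
  shows "dual_code (m + m) (systematic_code B) \<subseteq> systematic_code B"
proof
  have "(- B) * transpose_mat B = - (B * transpose_mat B)"
    using B by (intro uminus_mult_left_mat) auto
  then have "(- B) * transpose_mat B = 1\<^sub>m m"
    unfolding BBT by simp
  then have inv: "transpose_mat B * (- B) = 1\<^sub>m m"
    by (rule mat_mult_left_right_inverse_comm_ring[rotated 2]) (use B in auto)
  fix y assume y: "y \<in> dual_code (m + m) (systematic_code B)"
  define c d where "c = vec_first y m" and "d = vec_last y m"
  have c: "c \<in> carrier_vec m" and d: "d \<in> carrier_vec m"
    unfolding c_def d_def by auto
  have y_split: "y = c @\<^sub>v d"
    using y unfolding c_def d_def dual_code_def by auto
  have c_eq: "c = (- B) *\<^sub>v d"
  proof (rule eq_vecI)
    fix i assume "i < dim_vec ((- B) *\<^sub>v d)"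
    then have i: "i < m"
      using B by simp
    have "unit_vec m i @\<^sub>v (transpose_mat B *\<^sub>v unit_vec m i) \<in> systematic_code B"
      using B unfolding systematic_code_def by auto
    then have "(unit_vec m i @\<^sub>v (transpose_mat B *\<^sub>v unit_vec m i)) \<bullet> (c @\<^sub>v d) = 0"
      using y y_split unfolding dual_code_def by auto
    moreover have "(unit_vec m i @\<^sub>v (transpose_mat B *\<^sub>v unit_vec m i)) \<bullet> (c @\<^sub>v d)
        = unit_vec m i \<bullet> c + (transpose_mat B *\<^sub>v unit_vec m i) \<bullet> d"
      by (rule scalar_prod_append) (use B c d in auto)
    moreover have "(transpose_mat B *\<^sub>v unit_vec m i) \<bullet> d = unit_vec m i \<bullet> (B *\<^sub>v d)"
      by (rule transpose_vec_mult_scalar) (use B d in auto)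
    ultimately have "c $ i + (B *\<^sub>v d) $ i = 0"
      using B c d i by simp
    then show "c $ i = ((- B) *\<^sub>v d) $ i"
      using B d i by (simp add: eq_neg_iff_add_eq_0)
  qed (use B c in auto)
  have "transpose_mat B *\<^sub>v c = (transpose_mat B * (- B)) *\<^sub>v d"
    unfolding c_eq by (rule assoc_mult_mat_vec[symmetric]) (use B d in auto)
  then have "transpose_mat B *\<^sub>v c = d"
    using inv d by simp
  then show "y \<in> systematic_code B"
    using B c y_split unfolding systematic_code_def by auto
qed

lemma self_dual_systematic_code_iff:
  fixes B :: "'a :: comm_ring_1 mat"
  assumes B: "B \<in> carrier_mat m m"
  shows "self_dual (m + m) (systematic_code B) \<longleftrightarrow> B * transpose_mat B = - 1\<^sub>m m"
  using systematic_code_carrier[OF B] systematic_code_self_orthogonal_iff[OF B]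
    dual_code_subset_systematic_code[OF B]
  unfolding self_dual_def by blast

lemma four_block_mat_eq_iff:
  assumes "A1 \<in> carrier_mat nr1 nc1" "B1 \<in> carrier_mat nr1 nc2"
    "C1 \<in> carrier_mat nr2 nc1" "D1 \<in> carrier_mat nr2 nc2"
    and "A2 \<in> carrier_mat nr1 nc1" "B2 \<in> carrier_mat nr1 nc2"
    "C2 \<in> carrier_mat nr2 nc1" "D2 \<in> carrier_mat nr2 nc2"
  shows "four_block_mat A1 B1 C1 D1 = four_block_mat A2 B2 C2 D2
    \<longleftrightarrow> A1 = A2 \<and> B1 = B2 \<and> C1 = C2 \<and> D1 = D2"
proof
  assume "four_block_mat A1 B1 C1 D1 = four_block_mat A2 B2 C2 D2"
  then have entry: "four_block_mat A1 B1 C1 D1 $$ (i, j) = four_block_mat A2 B2 C2 D2 $$ (i, j)"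
    for i j by simp
  have "A1 = A2"
  proof (rule eq_matI)
    fix i j assume "i < dim_row A2" "j < dim_col A2"
    then show "A1 $$ (i, j) = A2 $$ (i, j)"
      using entry[of i j] assms by simp
  qed (use assms in auto)
  moreover have "B1 = B2"
  proof (rule eq_matI)
    fix i j assume "i < dim_row B2" "j < dim_col B2"
    then show "B1 $$ (i, j) = B2 $$ (i, j)"
      using entry[of i "nc1 + j"] assms by simp
  qed (use assms in auto)
  moreover have "C1 = C2"
  proof (rule eq_matI)
    fix i j assume "i < dim_row C2" "j < dim_col C2"
    then show "C1 $$ (i, j) = C2 $$ (i, j)"
      using entry[of "nr1 + i" j] assms by simp
  qed (use assms in auto)
  moreover have "D1 = D2"
  proof (rule eq_matI)
    fix i j assume "i < dim_row D2" "j < dim_col D2"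
    then show "D1 $$ (i, j) = D2 $$ (i, j)"
      using entry[of "nr1 + i" "nc1 + j"] assms by simp
  qed (use assms in auto)
  ultimately show "A1 = A2 \<and> B1 = B2 \<and> C1 = C2 \<and> D1 = D2"
    by blast
qed simp

lemma CHAR_2_block_conditions:
  fixes x y z w d :: "'a :: comm_ring_1"
  assumes "CHAR('a) = 2"
  shows "(x + w = d \<and> y + z = 0) \<longleftrightarrow> (x + y + z + w = d \<and> x + y = x + z)"
proof -
  have yz: "y + z = 0 \<longleftrightarrow> y = z"
    using uminus_CHAR_2[OF assms, of z] by (auto simp: add_eq_0_iff2)
  have "x + y + z + w = (x + w) + (y + z)"
    by (simp add: ac_simps)
  then show ?thesis
    using yz by auto
qed

lemma mult_transpose_four_block_eq_one_iff_CHAR_2: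
  fixes S T :: "'a :: comm_ring_1 mat"
  assumes char: "CHAR('a) = 2" and S: "S \<in> carrier_mat n n" and T: "T \<in> carrier_mat n n"
  shows "four_block_mat S T T S * transpose_mat (four_block_mat S T T S) = 1\<^sub>m (n + n)
    \<longleftrightarrow> (S + T) * transpose_mat (S + T) = 1\<^sub>m n
      \<and> S * transpose_mat (S + T) = (S + T) * transpose_mat S"
proof -
  define X Y Z W where "X = S * transpose_mat S" and "Y = S * transpose_mat T"
    and "Z = T * transpose_mat S" and "W = T * transpose_mat T"
  have ST: "transpose_mat S \<in> carrier_mat n n" "transpose_mat T \<in> carrier_mat n n"
    using S T by auto
  have XYZW: "X \<in> carrier_mat n n" "Y \<in> carrier_mat n n" "Z \<in> carrier_mat n n" "W \<in> carrier_mat n n"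
    unfolding X_def Y_def Z_def W_def using S T by auto
  have "four_block_mat S T T S * transpose_mat (four_block_mat S T T S)
      = four_block_mat (X + W) (Y + Z) (Z + Y) (W + X)"
    unfolding transpose_four_block_mat[OF S T T S] X_def Y_def Z_def W_def
    by (rule mult_four_block_mat[OF S T T S ST(1) ST(2) ST(2) ST(1)])
  then have "four_block_mat S T T S * transpose_mat (four_block_mat S T T S) = 1\<^sub>m (n + n)
      \<longleftrightarrow> four_block_mat (X + W) (Y + Z) (Z + Y) (W + X)
        = four_block_mat (1\<^sub>m n) (0\<^sub>m n n) (0\<^sub>m n n) (1\<^sub>m n)"
    by simp
  also have "\<dots> \<longleftrightarrow> X + W = 1\<^sub>m n \<and> Y + Z = 0\<^sub>m n n \<and> Z + Y = 0\<^sub>m n n \<and> W + X = 1\<^sub>m n"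
    by (rule four_block_mat_eq_iff) (use XYZW in auto)
  also have "\<dots> \<longleftrightarrow> X + W = 1\<^sub>m n \<and> Y + Z = 0\<^sub>m n n"
    using comm_add_mat[OF XYZW(1) XYZW(4)] comm_add_mat[OF XYZW(2) XYZW(3)] by auto
  also have "\<dots> \<longleftrightarrow> X + Y + Z + W = 1\<^sub>m n \<and> X + Y = X + Z"
    using XYZW by (simp add: mat_eq_iff CHAR_2_block_conditions[OF char] add.assoc
        all_conj_distrib[symmetric] imp_conjR[symmetric])
  finally have block_conditions: "four_block_mat S T T S * transpose_mat (four_block_mat S T T S) = 1\<^sub>m (n + n)
      \<longleftrightarrow> X + Y + Z + W = 1\<^sub>m n \<and> X + Y = X + Z" .
  have ST_transpose: "transpose_mat (S + T) = transpose_mat S + transpose_mat T"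
    using S T by (rule transpose_add)
  have "(S + T) * transpose_mat (S + T) = X + Y + Z + W"
    unfolding ST_transpose X_def Y_def Z_def W_def using S T ST
    by (simp add: add_mult_distrib_mat[of _ n n] mult_add_distrib_mat[of _ n n])
      (rule eq_matI, auto simp: ac_simps)
  moreover have "S * transpose_mat (S + T) = X + Y" and "(S + T) * transpose_mat S = X + Z"
    unfolding ST_transpose X_def Y_def Z_def using S T ST
    by (simp_all add: add_mult_distrib_mat[of _ n n] mult_add_distrib_mat[of _ n n])
  ultimately show ?thesis
    using block_conditions by simp
qed

lemma sigma_mat_carrier: "sigma_mat G n g v \<in> carrier_mat n n"
  unfolding sigma_mat_def by simp

lemma sigma_mat_gr_add:
  assumes "group G" and g: "g ` {..<n} \<subseteq> carrier G"
  shows "sigma_mat G n g (gr_add G v w) = sigma_mat G n g v + sigma_mat G n g w"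
proof -
  interpret group G by fact
  have "g i \<in> carrier G" if "i < n" for i
    using g that by auto
  then show ?thesis
    by (intro eq_matI) (auto simp: sigma_mat_def gr_add_def)
qed

lemma transpose_sigma_mat:
  assumes "group G" and g: "g ` {..<n} \<subseteq> carrier G"
  shows "transpose_mat (sigma_mat G n g v) = sigma_mat G n g (gr_star G v)"
proof -
  interpret group G by fact
  have "g i \<in> carrier G" if "i < n" for i
    using g that by auto
  then show ?thesis
    by (intro eq_matI) (auto simp: sigma_mat_def gr_star_def inv_mult_group)
qed

lemma reverse_circulant_transpose:
  assumes "reverse_circulant n A"
  shows "transpose_mat A = A"
proof (rule eq_matI)
  have A: "A \<in> carrier_mat n n"
    using assms unfolding reverse_circulant_def by simp
  fix i j assume "i < dim_row A" "j < dim_col A"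
  then have "i < n" "j < n"
    using A by auto
  then have "A $$ (j, i) = A $$ (i, j)"
    using assms unfolding reverse_circulant_def by (metis add.commute)
  then show "transpose_mat A $$ (i, j) = A $$ (i, j)"
    using A \<open>i < n\<close> \<open>j < n\<close> by simp
qed (use assms in \<open>auto simp: reverse_circulant_def\<close>)

theorem mainTheorem2:
  fixes G :: "('g, 'b) monoid_scheme" and n :: nat and g :: "nat \<Rightarrow> 'g"
    and v1 v2 :: "'g \<Rightarrow> 'a::{comm_ring_1, finite}" and A :: "'a mat"
  assumes "frobenius_ring TYPE('a)"
    and "CHAR('a) = 2"
    and "group G" and "finite (carrier G)" and "card (carrier G) = n"
    and "bij_betw g {..<n} (carrier G)"
    and "v1 \<in> group_ring G" and "v2 \<in> group_ring G" and "v1 \<noteq> v2"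
    and "reverse_circulant n A"
  shows "self_dual (4*n) (row_code (gen_matrix G n g v1 v2 A)) \<longleftrightarrow>
     ((sigma_mat G n g (gr_add G v1 v2) + A) * (sigma_mat G n g (gr_star G (gr_add G v1 v2)) + A) = 1\<^sub>m n
      \<and> sigma_mat G n g v1 * (sigma_mat G n g (gr_star G (gr_add G v1 v2)) + A)
        = (sigma_mat G n g (gr_add G v1 v2) + A) * sigma_mat G n g (gr_star G v1))"
proof -
  have g: "g ` {..<n} \<subseteq> carrier G"
    using bij_betw_imp_surj_on[OF assms(6)] by simp
  have A: "A \<in> carrier_mat n n" and A_sym: "transpose_mat A = A"
    using assms(10) reverse_circulant_transpose unfolding reverse_circulant_def by auto
  define S T where "S = sigma_mat G n g v1" and "T = sigma_mat G n g v2 + A"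
  have S: "S \<in> carrier_mat n n" and T: "T \<in> carrier_mat n n"
    unfolding S_def T_def using sigma_mat_carrier A by auto
  have P: "sigma_mat G n g (gr_add G v1 v2) + A = S + T"
    unfolding S_def T_def sigma_mat_gr_add[OF assms(3) g]
    by (rule assoc_add_mat[OF sigma_mat_carrier sigma_mat_carrier A])
  have P_transpose: "sigma_mat G n g (gr_star G (gr_add G v1 v2)) + A = transpose_mat (S + T)"
    unfolding P[symmetric] transpose_add[OF sigma_mat_carrier A] A_sym transpose_sigma_mat[OF assms(3) g] ..
  have S_transpose: "sigma_mat G n g (gr_star G v1) = transpose_mat S"
    unfolding S_def transpose_sigma_mat[OF assms(3) g] ..
  have code: "row_code (gen_matrix G n g v1 v2 A) = systematic_code (four_block_mat S T T S)"
    unfolding gen_matrix_def Let_def S_def[symmetric] T_def[symmetric] mult_2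
    by (rule row_code_four_block_one_mat) (use S T in auto)
  have minus_one: "- 1\<^sub>m (n + n) = (1\<^sub>m (n + n) :: 'a mat)"
    by (rule eq_matI) (auto simp: uminus_CHAR_2[OF assms(2)])
  have "4 * n = (n + n) + (n + n)"
    by simp
  then have "self_dual (4*n) (row_code (gen_matrix G n g v1 v2 A))
      \<longleftrightarrow> four_block_mat S T T S * transpose_mat (four_block_mat S T T S) = - 1\<^sub>m (n + n)"
    unfolding code by (metis self_dual_systematic_code_iff four_block_carrier_mat S T)
  also have "\<dots> \<longleftrightarrow> four_block_mat S T T S * transpose_mat (four_block_mat S T T S) = 1\<^sub>m (n + n)"
    unfolding minus_one ..
  also have "\<dots> \<longleftrightarrow> (S + T) * transpose_mat (S + T) = 1\<^sub>m n
      \<and> S * transpose_mat (S + T) = (S + T) * transpose_mat S"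
    by (rule mult_transpose_four_block_eq_one_iff_CHAR_2[OF assms(2) S T])
  finally show ?thesis
    unfolding P P_transpose S_transpose S_def[symmetric] .
qed

end
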